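(* Consider an infinite balls-in-bins process with $d\ge2$ labeled bins: at each time $t=1,2,\ldots$ one ball is placed into a bin chosen uniformly at random from $\{1,\ldots,d\}$, independently over time, and $N^{(i)}_t$ denotes the number of balls in bin $i$ at time $t$. For every fixed $K\in\mathbb{N}$ there is a constant $C_{K,d}$ (independent of $t$) such that for all $t\ge1$, $$\Pr\big(\exists\, i\neq j:\ |N^{(i)}_t-N^{(j)}_t|\le K\big)\le\frac{C_{K,d}}{\sqrt t}.$$ *)

theory Defs
  imports "HOL-Probability.Probability"
begin

text \<open>The infinite balls-in-bins process with d bins labelled 1..d: an infinite
  i.i.d. sequence of uniformly random bin labels. The ball of time s (s = 1,2,...)
  is the stream entry at index s - 1.\<close>
definition bins_process :: "nat \<Rightarrow> nat stream measure" where
  "bins_process d = stream_space (measure_pmf (pmf_of_set {1..d}))"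

definition bin_load :: "nat \<Rightarrow> nat \<Rightarrow> nat stream \<Rightarrow> nat" where
  "bin_load i t \<omega> = card {s. s < t \<and> \<omega> !! s = i}"

end

theory Submission
  imports Defs
begin

text \<open>
  The first t labels form a uniformly random word of length t over \<open>{1..d}\<close>, so it
  suffices to count words. Fix bins \<open>i \<noteq> j\<close> and a difference k. Among the words in
  which bins i and j together receive m balls, the difference k determines both loads,
  so there are at most \<open>(t choose m) * (m choose m div 2) * (d - 2) ^ (t - m)\<close> of them.
  With \<open>m choose m div 2 \<le> 2 ^ m / sqrt (m + 1)\<close> the sum over m becomes a binomial
  average of \<open>1 / sqrt (m + 1)\<close>, which Cauchy-Schwarz bounds by the square root of
  the binomial average of \<open>1 / (m + 1)\<close>; the latter is computed exactly and is
  \<open>O(1/t)\<close>. A union bound over i, j and \<open>\<bar>k\<bar> \<le> K\<close> finishes the proof.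
\<close>

definition words :: "'a set \<Rightarrow> nat \<Rightarrow> 'a list set" where
  "words A t = {xs. set xs \<subseteq> A \<and> length xs = t}"

lemma finite_words: "finite A \<Longrightarrow> finite (words A t)"
  unfolding words_def by (rule finite_lists_length_eq)

lemma card_words_Suc_filter:
  assumes "finite A"
  shows "card {xs \<in> words A (Suc t). P xs} = (\<Sum>x\<in>A. card {xs \<in> words A t. P (x # xs)})"
proof -
  have "{xs \<in> words A (Suc t). P xs} = (\<Union>x\<in>A. (#) x ` {xs \<in> words A t. P (x # xs)})"
    by (auto simp: words_def length_Suc_conv)
  moreover have "card (\<Union>x\<in>A. (#) x ` {xs \<in> words A t. P (x # xs)})
      = (\<Sum>x\<in>A. card {xs \<in> words A t. P (x # xs)})"
    using finite_words[OF assms] by (subst card_UN_disjoint) (auto simp: card_image assms)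
  ultimately show ?thesis by simp
qed

lemma measure_stream_space_stake:
  fixes A :: "'a::countable set"
  assumes "finite A" "A \<noteq> {}"
  defines "M \<equiv> stream_space (measure_pmf (pmf_of_set A))"
  shows "measure M {\<omega> \<in> space M. P (stake t \<omega>)}
    = card {xs \<in> words A t. P xs} / card A ^ t"
proof (induction t arbitrary: P)
  case 0
  interpret prob_space M
    unfolding M_def by (rule prob_space.prob_space_stream_space[OF prob_space_measure_pmf])
  have "{xs \<in> words A 0. P xs} = (if P [] then {[]} else {})"
    by (auto simp: words_def)
  then show ?case by (simp add: prob_space)
next
  case (Suc t)
  have "{\<omega> \<in> space M. P (stake (Suc t) \<omega>)} \<in> sets M"
    unfolding M_def by measurable
  then have "ennreal (measure M {\<omega> \<in> space M. P (stake (Suc t) \<omega>)})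
      = (\<integral>\<^sup>+x. ennreal (measure M {\<omega> \<in> space M. P (x # stake t \<omega>)})
          \<partial>measure_pmf (pmf_of_set A))"
    unfolding M_def by (subst prob_space.prob_stream_space[OF prob_space_measure_pmf]) simp_all
  also have "\<dots> = (\<integral>\<^sup>+x. ennreal (card {xs \<in> words A t. P (x # xs)} / card A ^ t)
      \<partial>measure_pmf (pmf_of_set A))"
    using Suc.IH[of "\<lambda>xs. P (_ # xs)"] by simp
  also have "\<dots> = (\<Sum>x\<in>A. ennreal (card {xs \<in> words A t. P (x # xs)} / card A ^ t)) / card A"
    using assms by (simp add: nn_integral_pmf_of_set)
  also have "\<dots> = ennreal (card {xs \<in> words A (Suc t). P xs} / card A ^ Suc t)"
    using assms by (simp add: card_words_Suc_filter divide_ennreal ennreal_of_nat_eq_real_of_nat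
        card_gt_0_iff sum_divide_distrib[symmetric] flip: of_nat_sum)
  finally show ?case by (simp add: ennreal_inj)
qed

text \<open>For \<open>a + b > t\<close> the truncated exponent is harmless: \<open>t choose (a + b) = 0\<close>.\<close>

definition words_with_counts :: "nat \<Rightarrow> nat \<Rightarrow> nat \<Rightarrow> nat \<Rightarrow> nat" where
  "words_with_counts n t a b = (t choose (a + b)) * ((a + b) choose a) * n ^ (t - (a + b))"

lemma choose_Suc_times_power:
  assumes "0 < m"
  shows "(Suc t choose m) * n ^ (Suc t - m)
    = (t choose (m - 1)) * n ^ (t - (m - 1)) + n * ((t choose m) * n ^ (t - m))"
proof (cases "m \<le> t")
  case True
  then have "Suc t - m = Suc (t - m)" "t - (m - 1) = Suc (t - m)"
    using assms by auto
  moreover have "Suc t choose m = (t choose (m - 1)) + (t choose m)"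
    using assms by (cases m) auto
  ultimately show ?thesis by (simp add: algebra_simps)
next
  case False
  then show ?thesis using assms by (cases "m = Suc t") (auto simp: binomial_eq_0)
qed

lemma choose_add_reduce:
  assumes "0 < a + b"
  shows "(a + b) choose a
    = (if a = 0 then 0 else (a + b - 1) choose (a - 1)) + (if b = 0 then 0 else (a + b - 1) choose a)"
  using assms by (cases a; cases b) auto

lemma words_with_counts_Suc:
  "words_with_counts n (Suc t) a b
    = (if a = 0 then 0 else words_with_counts n t (a - 1) b)
    + (if b = 0 then 0 else words_with_counts n t a (b - 1))
    + n * words_with_counts n t a b"
proof (cases "a + b = 0")
  case True
  then show ?thesis by (simp add: words_with_counts_def)
next
  case False
  define m where "m = a + b"
  have "(if a = 0 then 0 else words_with_counts n t (a - 1) b)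
      + (if b = 0 then 0 else words_with_counts n t a (b - 1))
      = (t choose (m - 1)) * n ^ (t - (m - 1))
        * ((if a = 0 then 0 else (m - 1) choose (a - 1)) + (if b = 0 then 0 else (m - 1) choose a))"
    by (simp add: words_with_counts_def m_def algebra_simps)
  also have "\<dots> = (t choose (m - 1)) * n ^ (t - (m - 1)) * (m choose a)"
    using choose_add_reduce[of a b] False by (simp only: m_def)
  finally show ?thesis
    using choose_Suc_times_power[of m t n] False
    by (simp add: words_with_counts_def m_def algebra_simps)
qed

lemma card_words_with_counts:
  assumes "finite A" "i \<in> A" "j \<in> A" "i \<noteq> j"
  shows "card {xs \<in> words A t. count_list xs i = a \<and> count_list xs j = b}
    = words_with_counts (card A - 2) t a b"
proof (induction t arbitrary: a b)
  case 0
  have "{xs \<in> words A 0. count_list xs i = a \<and> count_list xs j = b}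
      = (if a = 0 \<and> b = 0 then {[]} else {})"
    by (auto simp: words_def)
  then show ?case by (simp add: words_with_counts_def)
next
  case (Suc t)
  let ?N = "\<lambda>a b. card {xs \<in> words A t. count_list xs i = a \<and> count_list xs j = b}"
  let ?f = "\<lambda>x. card {xs \<in> words A t. count_list (x # xs) i = a \<and> count_list (x # xs) j = b}"
  \<comment> \<open>split on the first letter: i, j, or one of the \<open>card A - 2\<close> others\<close>
  have A: "A = insert i (insert j (A - {i, j}))"
    using assms by auto
  have "(\<Sum>x\<in>A. ?f x) = ?f i + ?f j + (\<Sum>x\<in>A - {i, j}. ?f x)"
    using assms by (subst A) (simp add: sum.insert_remove insert_Diff_if)
  also have "?f i = (if a = 0 then 0 else ?N (a - 1) b)"
    using assms by (cases a) auto
  also have "?f j = (if b = 0 then 0 else ?N a (b - 1))"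
    using assms by (cases b) auto
  also have "(\<Sum>x\<in>A - {i, j}. ?f x) = (card A - 2) * ?N a b"
    using assms by (simp add: card_Diff_subset numeral_2_eq_2)
  finally show ?case
    by (simp only: card_words_Suc_filter[OF assms(1)] Suc.IH words_with_counts_Suc)
qed

lemma Suc_times_binomial_odd_central:
  "Suc n * ((2 * n + 1) choose n) = (2 * n + 1) * ((2 * n) choose n)"
proof -
  have "(2 * n + 1) choose Suc n = (2 * n + 1) choose n"
    using central_binomial_odd[of "2 * n + 1"] by simp
  then show ?thesis
    using Suc_times_binomial_eq[of "2 * n" n] by simp
qed

lemma binomial_even_central_Suc: "(2 * Suc n) choose Suc n = 2 * ((2 * n + 1) choose n)"
proof -
  have "(2 * n + 1) choose Suc n = (2 * n + 1) choose n"
    using central_binomial_odd[of "2 * n + 1"] by simp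
  then show ?thesis by simp
qed

lemma central_binomial_even_bound: "((2 * n) choose n)\<^sup>2 * (2 * n + 1) \<le> 16 ^ n"
proof (induction n)
  case 0
  then show ?case by simp
next
  case (Suc n)
  define c where "c = (2 * n) choose n"
  define c1 where "c1 = (2 * n + 1) choose n"
  have c1: "Suc n * c1 = (2 * n + 1) * c"
    unfolding c_def c1_def by (rule Suc_times_binomial_odd_central)
  have "(Suc n)\<^sup>2 * (((2 * Suc n) choose Suc n)\<^sup>2 * (2 * Suc n + 1))
      = 4 * (2 * n + 3) * (Suc n * c1)\<^sup>2"
    unfolding binomial_even_central_Suc c1_def[symmetric] by (simp add: power2_eq_square algebra_simps)
  also have "\<dots> = 4 * (2 * n + 1) * (2 * n + 3) * (c\<^sup>2 * (2 * n + 1))"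
    unfolding c1 by (simp only: power2_eq_square mult_ac)
  also have "\<dots> \<le> 4 * (2 * n + 1) * (2 * n + 3) * 16 ^ n"
    using Suc.IH unfolding c_def by (rule mult_le_mono2)
  also have "\<dots> \<le> (Suc n)\<^sup>2 * 16 ^ Suc n"
    by (simp add: power2_eq_square algebra_simps)
  finally show ?case
    by (rule mult_le_cancel1[THEN iffD1, THEN mp]) simp
qed

lemma central_binomial_bound: "(m choose (m div 2))\<^sup>2 * (m + 1) \<le> 4 ^ m"
proof (cases "even m")
  case True
  then obtain n where "m = 2 * n" by blast
  then show ?thesis
    using central_binomial_even_bound[of n] by (simp add: power_mult)
next
  case False
  then obtain n where m: "m = 2 * n + 1" using oddE by blast
  define c where "c = (2 * n) choose n"
  define c1 where "c1 = (2 * n + 1) choose n"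
  have c1: "Suc n * c1 = (2 * n + 1) * c"
    unfolding c_def c1_def by (rule Suc_times_binomial_odd_central)
  have "(Suc n)\<^sup>2 * (c1\<^sup>2 * (2 * n + 2)) = 2 * (n + 1) * (Suc n * c1)\<^sup>2"
    by (simp add: power2_eq_square algebra_simps)
  also have "\<dots> = 2 * (n + 1) * (2 * n + 1) * (c\<^sup>2 * (2 * n + 1))"
    unfolding c1 by (simp only: power2_eq_square mult_ac)
  also have "\<dots> \<le> 2 * (n + 1) * (2 * n + 1) * 16 ^ n"
    using central_binomial_even_bound[of n] unfolding c_def by (rule mult_le_mono2)
  also have "\<dots> \<le> (Suc n)\<^sup>2 * (4 * 16 ^ n)"
    by (simp add: power2_eq_square algebra_simps)
  also have "4 * 16 ^ n = (4::nat) ^ m"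
    by (simp add: m power_mult)
  finally have "c1\<^sup>2 * (2 * n + 2) \<le> 4 ^ m"
    by (rule mult_le_cancel1[THEN iffD1, THEN mp]) simp
  moreover have "m div 2 = n" "m + 1 = 2 * n + 2"
    using m by simp_all
  ultimately show ?thesis
    by (simp add: m c1_def)
qed

lemma central_binomial_le_sqrt: "real (m choose (m div 2)) \<le> 2 ^ m / sqrt (real m + 1)"
proof -
  have "(real (m choose (m div 2)) * sqrt (real m + 1))\<^sup>2 = real ((m choose (m div 2))\<^sup>2 * (m + 1))"
    by (simp add: power_mult_distrib algebra_simps)
  also have "\<dots> \<le> 4 ^ m"
    using central_binomial_bound[of m] by (metis of_nat_le_iff of_nat_numeral of_nat_power)
  also have "(4::real) ^ m = (2 ^ m)\<^sup>2"
    by (simp add: power2_eq_square flip: power_mult_distrib)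
  finally have "(real (m choose (m div 2)) * sqrt (real m + 1))\<^sup>2 \<le> (2 ^ m)\<^sup>2" .
  then have "real (m choose (m div 2)) * sqrt (real m + 1) \<le> 2 ^ m"
    by (rule power2_le_imp_le) simp
  then show ?thesis
    by (simp add: field_simps)
qed

lemma count_list_add_count_list_le_length:
  "x \<noteq> y \<Longrightarrow> count_list xs x + count_list xs y \<le> length xs"
  by (induction xs) auto

lemma card_words_count_diff_le:
  assumes "finite A" "i \<in> A" "j \<in> A" "i \<noteq> j"
  shows "card {xs \<in> words A t. int (count_list xs i) - int (count_list xs j) = k}
    \<le> (\<Sum>m\<le>t. (t choose m) * (m choose (m div 2)) * (card A - 2) ^ (t - m))"
proof -
  let ?D = "{xs \<in> words A t. int (count_list xs i) - int (count_list xs j) = k}"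
  let ?E = "\<lambda>m. {xs \<in> ?D. count_list xs i + count_list xs j = m}"
  have fin: "finite (?E m)" for m
    using finite_words[OF assms(1)] by simp
  have card_E: "card (?E m) \<le> (t choose m) * (m choose (m div 2)) * (card A - 2) ^ (t - m)" for m
  proof (cases "?E m = {}")
    case True
    then show ?thesis by (subst True) simp
  next
    case False
    then obtain ys where ys: "ys \<in> ?E m" by blast
    \<comment> \<open>the sum and the difference of the two counts determine both of them\<close>
    have "?E m \<subseteq>
        {xs \<in> words A t. count_list xs i = count_list ys i \<and> count_list xs j = count_list ys j}"
      using ys by auto
    then have "card (?E m) \<le> words_with_counts (card A - 2) t (count_list ys i) (count_list ys j)"
      using card_mono[OF _ \<open>?E m \<subseteq> _\<close>] finite_words[OF assms(1)]
      by (simp add: card_words_with_counts[OF assms])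
    also have "\<dots> \<le> (t choose m) * (m choose (m div 2)) * (card A - 2) ^ (t - m)"
      using ys by (auto simp: words_with_counts_def intro: binomial_maximum)
    finally show ?thesis .
  qed
  have "?D \<subseteq> (\<Union>m\<le>t. ?E m)"
    using count_list_add_count_list_le_length[OF assms(4)] by (auto simp: words_def)
  then have "card ?D \<le> card (\<Union>m\<le>t. ?E m)"
    by (rule card_mono[rotated]) (use fin in auto)
  also have "\<dots> \<le> (\<Sum>m\<le>t. card (?E m))"
    by (rule card_UN_le) simp
  also have "\<dots> \<le> (\<Sum>m\<le>t. (t choose m) * (m choose (m div 2)) * (card A - 2) ^ (t - m))"
    by (rule sum_mono) (rule card_E)
  finally show ?thesis .
qed

definition close_counts :: "nat \<Rightarrow> 'a set \<Rightarrow> 'a list \<Rightarrow> bool" where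
  "close_counts K A xs \<longleftrightarrow>
    (\<exists>i\<in>A. \<exists>j\<in>A. i \<noteq> j \<and> \<bar>int (count_list xs i) - int (count_list xs j)\<bar> \<le> int K)"

lemma card_words_close_counts_le:
  assumes "finite A"
  shows "card {xs \<in> words A t. close_counts K A xs}
    \<le> card A ^ 2 * (2 * K + 1) * (\<Sum>m\<le>t. (t choose m) * (m choose (m div 2)) * (card A - 2) ^ (t - m))"
proof -
  let ?B = "\<Sum>m\<le>t. (t choose m) * (m choose (m div 2)) * (card A - 2) ^ (t - m)"
  let ?P = "{(i, j). i \<in> A \<and> j \<in> A \<and> i \<noteq> j}"
  let ?D = "\<lambda>((i, j), k). {xs \<in> words A t. int (count_list xs i) - int (count_list xs j) = k}"
  have "?P \<subseteq> A \<times> A"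
    by auto
  then have "finite ?P" "card ?P \<le> card A ^ 2"
    using assms finite_subset card_mono[of "A \<times> A"]
    by (auto simp: card_cartesian_product power2_eq_square)
  have "{xs \<in> words A t. close_counts K A xs} \<subseteq> (\<Union>p\<in>?P \<times> {-int K..int K}. ?D p)"
    by (force simp: close_counts_def)
  then have "card {xs \<in> words A t. close_counts K A xs}
      \<le> card (\<Union>p\<in>?P \<times> {-int K..int K}. ?D p)"
    by (rule card_mono[rotated]) (auto intro: finite_subset[OF _ finite_words[OF assms]])
  also have "\<dots> \<le> (\<Sum>p\<in>?P \<times> {-int K..int K}. card (?D p))"
    by (rule card_UN_le) (use \<open>finite ?P\<close> in simp)
  also have "\<dots> \<le> (\<Sum>p\<in>?P \<times> {-int K..int K}. ?B)"
    using card_words_count_diff_le[OF assms] by (intro sum_mono) auto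
  also have "\<dots> = card ?P * (2 * K + 1) * ?B"
    by (simp add: card_cartesian_product nat_add_distrib nat_mult_distrib)
  also have "\<dots> \<le> card A ^ 2 * (2 * K + 1) * ?B"
    using \<open>card ?P \<le> card A ^ 2\<close> by (intro mult_le_mono1)
  finally show ?thesis .
qed

lemma sum_binomial_div_Suc:
  fixes x y :: real
  assumes "x \<noteq> 0"
  shows "(\<Sum>m\<le>t. real (t choose m) * x ^ m * y ^ (t - m) / (real m + 1))
    = ((x + y) ^ Suc t - y ^ Suc t) / ((real t + 1) * x)"
proof -
  let ?f = "\<lambda>m. (Suc t choose m) * x ^ m * y ^ (Suc t - m)"
  have "(\<Sum>m\<le>t. (t choose m) * x ^ m * y ^ (t - m) / (real m + 1))
      = (\<Sum>m\<le>t. ?f (Suc m)) / ((real t + 1) * x)"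
    unfolding sum_divide_distrib
  proof (rule sum.cong[OF refl])
    fix m
    have "(real m + 1) * (Suc t choose Suc m) = (real t + 1) * (t choose m)"
      using Suc_times_binomial[of m t] by (metis of_nat_Suc of_nat_mult add.commute)
    then have "(t choose m) / (real m + 1) = (Suc t choose Suc m) / (real t + 1)"
      by (simp add: field_simps del: binomial_Suc_Suc)
    then have "(t choose m) * x ^ m * y ^ (t - m) / (real m + 1)
        = (Suc t choose Suc m) / (real t + 1) * x ^ m * y ^ (t - m)"
      by (metis times_divide_eq_left mult.commute mult.assoc)
    also have "\<dots> = ?f (Suc m) / ((real t + 1) * x)"
      using assms by (simp add: ac_simps del: binomial_Suc_Suc)
    finally show "(t choose m) * x ^ m * y ^ (t - m) / (real m + 1) = ?f (Suc m) / ((real t + 1) * x)" .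
  qed
  also have "(\<Sum>m\<le>t. ?f (Suc m)) = (x + y) ^ Suc t - y ^ Suc t"
    using sum.atMost_Suc_shift[of ?f t] binomial_ring[of x y "Suc t"] by simp
  finally show ?thesis .
qed

lemma sum_binomial_central_le:
  fixes y :: real
  assumes "0 \<le> y"
  shows "(\<Sum>m\<le>t. real (t choose m) * real (m choose (m div 2)) * y ^ (t - m))
    \<le> (2 + y) ^ t * sqrt ((2 + y) / (2 * (real t + 1)))"
proof -
  define w where "w m = real (t choose m) * 2 ^ m * y ^ (t - m)" for m
  have w_nonneg: "0 \<le> w m" for m
    using assms by (simp add: w_def)
  have "real (t choose m) * (m choose (m div 2)) * y ^ (t - m) \<le> w m / sqrt (real m + 1)" for m
  proof -
    have "real (t choose m) * (m choose (m div 2)) * y ^ (t - m)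
        \<le> (t choose m) * (2 ^ m / sqrt (real m + 1)) * y ^ (t - m)"
      using assms central_binomial_le_sqrt[of m] by (intro mult_right_mono mult_left_mono) auto
    then show ?thesis
      by (simp add: w_def)
  qed
  then have "(\<Sum>m\<le>t. real (t choose m) * real (m choose (m div 2)) * y ^ (t - m))
      \<le> (\<Sum>m\<le>t. w m / sqrt (real m + 1))"
    by (rule sum_mono)
  also have "\<dots> = (\<Sum>m\<le>t. sqrt (w m) * sqrt (w m / (real m + 1)))"
    using w_nonneg by (simp add: real_sqrt_divide flip: power2_eq_square)
  also have "\<dots> \<le> sqrt ((\<Sum>m\<le>t. w m) * (\<Sum>m\<le>t. w m / (real m + 1)))"
    using Cauchy_Schwarz_ineq_sum[of "\<lambda>m. sqrt (w m)" "\<lambda>m. sqrt (w m / (real m + 1))" "{..t}"] w_nonneg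
    by (intro real_le_rsqrt) simp
  also have "\<dots> \<le> sqrt ((2 + y) ^ t * ((2 + y) ^ Suc t / (2 * (real t + 1))))"
  proof -
    have sum_w: "(\<Sum>m\<le>t. w m) = (2 + y) ^ t"
      using binomial_ring[of 2 y t] by (simp add: w_def)
    moreover have "(\<Sum>m\<le>t. w m / (real m + 1)) \<le> (2 + y) ^ Suc t / (2 * (real t + 1))"
    proof -
      have "(\<Sum>m\<le>t. w m / (real m + 1)) = ((2 + y) ^ Suc t - y ^ Suc t) / ((real t + 1) * 2)"
        unfolding w_def by (rule sum_binomial_div_Suc) simp
      also have "\<dots> \<le> (2 + y) ^ Suc t / ((real t + 1) * 2)"
        using assms by (intro divide_right_mono) auto
      finally show ?thesis
        by (simp add: mult.commute)
    qed
    ultimately show ?thesis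
      unfolding sum_w using assms by (intro real_sqrt_le_mono mult_left_mono) auto
  qed
  also have "\<dots> = (2 + y) ^ t * sqrt ((2 + y) / (2 * (real t + 1)))"
  proof -
    have "(2 + y) ^ t * ((2 + y) ^ Suc t / (2 * (real t + 1)))
        = ((2 + y) ^ t)\<^sup>2 * ((2 + y) / (2 * (real t + 1)))"
      by (simp add: power2_eq_square)
    then show ?thesis
      using assms by (simp only: real_sqrt_mult real_sqrt_abs) simp
  qed
  finally show ?thesis .
qed

lemma card_words_close_counts_div_le:
  assumes "finite A" "2 \<le> card A"
  shows "card {xs \<in> words A t. close_counts K A xs} / card A ^ t
    \<le> real (card A) ^ 2 * (2 * real K + 1) * sqrt (card A / (2 * (real t + 1)))"
proof -
  let ?n = "card A"
  let ?B = "\<Sum>m\<le>t. (t choose m) * (m choose (m div 2)) * (?n - 2) ^ (t - m)"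
  have "real ?B \<le> ?n ^ t * sqrt (?n / (2 * (real t + 1)))"
    using sum_binomial_central_le[of "real (?n - 2)" t] assms(2) by (simp add: of_nat_diff)
  then have "real ?B / ?n ^ t \<le> sqrt (?n / (2 * (real t + 1)))"
    using assms(2) by (simp add: pos_divide_le_eq mult.commute)
  have "card {xs \<in> words A t. close_counts K A xs} / ?n ^ t \<le> real (?n ^ 2 * (2 * K + 1) * ?B) / ?n ^ t"
    using card_words_close_counts_le[OF assms(1), of t K]
    by (rule divide_right_mono[OF of_nat_mono]) simp
  also have "\<dots> = real ?n ^ 2 * (2 * real K + 1) * (real ?B / ?n ^ t)"
    by (simp add: algebra_simps)
  also have "\<dots> \<le> real ?n ^ 2 * (2 * real K + 1) * sqrt (?n / (2 * (real t + 1)))"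
    using \<open>real ?B / ?n ^ t \<le> _\<close> by (rule mult_left_mono) simp
  finally show ?thesis .
qed

lemma bin_load_eq_count_list_stake: "bin_load i t \<omega> = count_list (stake t \<omega>) i"
proof (induction t)
  case 0
  then show ?case by (simp add: bin_load_def)
next
  case (Suc t)
  have "{s. s < Suc t \<and> \<omega> !! s = i}
      = {s. s < t \<and> \<omega> !! s = i} \<union> (if \<omega> !! t = i then {t} else {})"
    by (auto simp: less_Suc_eq)
  then have "bin_load i (Suc t) \<omega> = bin_load i t \<omega> + (if \<omega> !! t = i then 1 else 0)"
    by (auto simp: bin_load_def)
  then show ?case
    using Suc.IH unfolding stake_Suc count_list_append by simp
qed

theorem lemma4p10:
  fixes d K :: nat
  assumes "d \<ge> 2"
  shows "\<exists>C::real. \<forall>t::nat. t \<ge> 1 \<longrightarrow>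
    measure (bins_process d)
      {\<omega> \<in> space (bins_process d). \<exists>i\<in>{1..d}. \<exists>j\<in>{1..d}. i \<noteq> j \<and>
          \<bar>int (bin_load i t \<omega>) - int (bin_load j t \<omega>)\<bar> \<le> int K}
    \<le> C / sqrt (real t)"
proof (intro exI[of _ "real d ^ 2 * (2 * real K + 1) * sqrt d"] allI impI)
  fix t :: nat
  assume "t \<ge> 1"
  define A where "A = {1..d}"
  have A: "finite A" "A \<noteq> {}" "card A = d"
    using assms by (auto simp: A_def)
  have "measure (bins_process d)
      {\<omega> \<in> space (bins_process d). \<exists>i\<in>{1..d}. \<exists>j\<in>{1..d}. i \<noteq> j \<and>
          \<bar>int (bin_load i t \<omega>) - int (bin_load j t \<omega>)\<bar> \<le> int K}
      = card {xs \<in> words A t. close_counts K A xs} / d ^ t" (is "?prob = _")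
    using measure_stream_space_stake[OF A(1,2), of "close_counts K A" t] A(3)
    by (simp add: bins_process_def A_def close_counts_def bin_load_eq_count_list_stake)
  also have "\<dots> \<le> real d ^ 2 * (2 * real K + 1) * sqrt (d / (2 * (real t + 1)))"
    using card_words_close_counts_div_le[of A t K] A(1) assms unfolding A(3) by blast
  also have "\<dots> \<le> real d ^ 2 * (2 * real K + 1) * sqrt (d / t)"
    using \<open>t \<ge> 1\<close> by (intro mult_left_mono real_sqrt_le_mono divide_left_mono) auto
  finally show "?prob \<le> real d ^ 2 * (2 * real K + 1) * sqrt d / sqrt t"
    by (simp add: real_sqrt_divide)
qed

end
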